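(* For every Tychonoff space $X$, the following are equivalent: (1) $C_p(X)\models S_{fin}(\Gamma_f,\Omega_f)$ for every $f\in C_p(X)$; (2) $X\models S_{fin}(\Gamma_F,\Omega)$.
   Context: All spaces are Tychonoff; $C_p(X)$ is $C(X)$ with pointwise convergence topology. For $y$ in a space $Y$: $\Omega_y=\{A\subseteq Y: y\in\overline A\setminus A\}$, $\Gamma_y=\{A\subseteq Y: A$ infinite, $y\notin A$, every neighbourhood of $y$ contains all but finitely many points of $A\}$. Zero-set: $g^{-1}(0)$, $g\in C(X)$; cozero-set: its complement. A cover $\mathcal U$ of $X$ always means $X=\bigcup\mathcal U$, $X\notin\mathcal U$; $\omega$-cover: every finite subset lies in a member; $\gamma$-cover: infinite, each point in all but finitely many members. $\Omega$: open $\omega$-covers. $\Gamma_F$: $\gamma$-covers $\mathcal U$ of $X$ by cozero-sets for which there are zero-sets $F(U)\subseteq U$ ($U\in\mathcal U$) with $\{F(U):U\in\mathcal U\}$ a $\gamma$-cover of $X$. $S_{fin}(\mathcal A,\mathcal B)$: for every sequence $(A_n)$ from $\mathcal A$ there are finite $B_n\subseteq A_n$ with $\bigcup_nB_n\in\mathcal B$. *)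

theory Defs
  imports "HOL-Analysis.Analysis"
begin

definition tychonoff_space :: "'a topology \<Rightarrow> bool" where
  "tychonoff_space X \<longleftrightarrow> completely_regular_space X \<and> t1_space X"

text \<open>C(X): continuous real functions on X, represented extensionally
  (value undefined outside the underlying set).\<close>
definition Cfun :: "'a topology \<Rightarrow> ('a \<Rightarrow> real) set" where
  "Cfun X = {f \<in> topspace X \<rightarrow>\<^sub>E UNIV. continuous_map X euclideanreal f}"

definition Cp :: "'a topology \<Rightarrow> ('a \<Rightarrow> real) topology" where
  "Cp X = subtopology (product_topology (\<lambda>_. euclideanreal) (topspace X)) (Cfun X)"

definition Omega_at :: "'b topology \<Rightarrow> 'b \<Rightarrow> 'b set set" where
  "Omega_at Y y = {A. A \<subseteq> topspace Y \<and> y \<in> Y closure_of A \<and> y \<notin> A}"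

definition Gamma_at :: "'b topology \<Rightarrow> 'b \<Rightarrow> 'b set set" where
  "Gamma_at Y y = {A. A \<subseteq> topspace Y \<and> infinite A \<and> y \<notin> A \<and>
      (\<forall>U. openin Y U \<and> y \<in> U \<longrightarrow> finite (A - U))}"

definition S_fin :: "'c set set \<Rightarrow> 'c set set \<Rightarrow> bool" where
  "S_fin \<A> \<B> \<longleftrightarrow> (\<forall>A :: nat \<Rightarrow> 'c set. (\<forall>n. A n \<in> \<A>) \<longrightarrow>
      (\<exists>B :: nat \<Rightarrow> 'c set. (\<forall>n. finite (B n) \<and> B n \<subseteq> A n) \<and> (\<Union>n. B n) \<in> \<B>))"

definition zero_set :: "'a topology \<Rightarrow> 'a set \<Rightarrow> bool" where
  "zero_set X Z \<longleftrightarrow> (\<exists>g. continuous_map X euclideanreal g \<and> Z = {x \<in> topspace X. g x = 0})"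

definition cozero_set :: "'a topology \<Rightarrow> 'a set \<Rightarrow> bool" where
  "cozero_set X U \<longleftrightarrow> (\<exists>g. continuous_map X euclideanreal g \<and> U = {x \<in> topspace X. g x \<noteq> 0})"

definition is_cover :: "'a topology \<Rightarrow> 'a set set \<Rightarrow> bool" where
  "is_cover X \<U> \<longleftrightarrow> \<Union>\<U> = topspace X \<and> topspace X \<notin> \<U>"

definition omega_cover :: "'a topology \<Rightarrow> 'a set set \<Rightarrow> bool" where
  "omega_cover X \<U> \<longleftrightarrow> is_cover X \<U> \<and>
     (\<forall>F. finite F \<and> F \<subseteq> topspace X \<longrightarrow> (\<exists>U\<in>\<U>. F \<subseteq> U))"

definition gamma_cover :: "'a topology \<Rightarrow> 'a set set \<Rightarrow> bool" where
  "gamma_cover X \<U> \<longleftrightarrow> is_cover X \<U> \<and> infinite \<U> \<and>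
     (\<forall>x\<in>topspace X. finite {U \<in> \<U>. x \<notin> U})"

definition Omega_cov :: "'a topology \<Rightarrow> 'a set set set" where
  "Omega_cov X = {\<U>. omega_cover X \<U> \<and> (\<forall>U\<in>\<U>. openin X U)}"

definition Gamma_F :: "'a topology \<Rightarrow> 'a set set set" where
  "Gamma_F X = {\<U>. gamma_cover X \<U> \<and> (\<forall>U\<in>\<U>. cozero_set X U) \<and>
     (\<exists>F. (\<forall>U\<in>\<U>. zero_set X (F U) \<and> F U \<subseteq> U) \<and> gamma_cover X (F ` \<U>))}"

end

theory Submission
  imports Defs
begin

text \<open>
  Both directions translate between sequences converging in \<open>C\<^sub>p(X)\<close> and \<open>\<gamma>\<close>-covers.

  Given a \<open>\<Gamma>\<^sub>F\<close>-cover \<open>\<U>\<close> with zero-sets \<open>F(U) \<subseteq> U\<close>, pick continuous \<open>\<phi>\<^sub>U\<close> vanishing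
  exactly on \<open>F(U)\<close> and equal to \<open>1\<close> outside \<open>U\<close>. Since the \<open>F(U)\<close> form a \<open>\<gamma>\<close>-cover,
  the \<open>\<phi>\<^sub>U\<close> converge to \<open>0\<close> in \<open>C\<^sub>p(X)\<close>, and \<open>|\<phi>\<^sub>U| < 1\<close> only inside \<open>U\<close>. So a
  selection accumulating at \<open>0\<close> gives, for every finite set, a selected \<open>U\<close> containing it:
  an \<open>\<omega>\<close>-cover.

  Conversely, if \<open>g\<^sub>n \<rightarrow> f\<close> in \<open>C\<^sub>p(X)\<close>, the sets \<open>{|g\<^sub>n - f| < \<epsilon>}\<close> form a
  \<open>\<Gamma>\<^sub>F\<close>-cover (with zero-sets \<open>{|g\<^sub>n - f| \<le> \<epsilon>/2}\<close>) unless one of them is all of \<open>X\<close>.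
  Applying \<open>S\<^sub>f\<^sub>i\<^sub>n(\<Gamma>\<^sub>F, \<Omega>)\<close> with radii \<open>\<epsilon>\<^sub>n \<rightarrow> 0\<close> and covering a finite set by a
  member from a late stage yields a selected function close to \<open>f\<close> on that set. Stages
  containing a function uniformly \<open>\<epsilon>\<^sub>n\<close>-close to \<open>f\<close> are used directly.
\<close>

definition Cp_nbhd :: "'a topology \<Rightarrow> 'a set \<Rightarrow> ('a \<Rightarrow> real) \<Rightarrow> real \<Rightarrow> ('a \<Rightarrow> real) set" where
  "Cp_nbhd X F f e = {g \<in> Cfun X. \<forall>x\<in>F. \<bar>g x - f x\<bar> < e}"

lemma topspace_Cp: "topspace (Cp X) = Cfun X"
  unfolding Cp_def Cfun_def by (auto simp: topspace_product_topology)

lemma restrict_in_Cfun: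
  "continuous_map X euclideanreal g \<Longrightarrow> restrict g (topspace X) \<in> Cfun X"
  unfolding Cfun_def by (auto intro: continuous_map_eq)

definition Cfun_zero :: "'a topology \<Rightarrow> 'a \<Rightarrow> real" where
  "Cfun_zero X = restrict (\<lambda>_. 0) (topspace X)"

lemma Cfun_zero_in_Cfun: "Cfun_zero X \<in> Cfun X"
  unfolding Cfun_zero_def by (rule restrict_in_Cfun) simp

lemma Cp_nbhd_self: "f \<in> Cfun X \<Longrightarrow> e > 0 \<Longrightarrow> f \<in> Cp_nbhd X F f e"
  by (simp add: Cp_nbhd_def)

lemma openin_Cp_nbhd:
  assumes "finite F" "F \<subseteq> topspace X"
  shows "openin (Cp X) (Cp_nbhd X F f e)"
  using assms
proof (induction F)
  case empty
  then show ?case using openin_topspace[of "Cp X"] by (simp add: Cp_nbhd_def topspace_Cp)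
next
  case (insert a F)
  let ?P = "product_topology (\<lambda>_. euclideanreal) (topspace X)"
  have "openin ?P {h \<in> topspace ?P. h a \<in> ball (f a) e}"
    using insert.prems
    by (intro openin_continuous_map_preimage[OF continuous_map_product_projection]) auto
  then have "openin (Cp X) ({h \<in> topspace ?P. h a \<in> ball (f a) e} \<inter> Cfun X)"
    unfolding Cp_def by (auto simp: openin_subtopology)
  moreover have "Cp_nbhd X (insert a F) f e
      = ({h \<in> topspace ?P. h a \<in> ball (f a) e} \<inter> Cfun X) \<inter> Cp_nbhd X F f e"
    using topspace_Cp[of X]
    by (auto simp: Cp_nbhd_def Cp_def dist_real_def abs_minus_commute)
  ultimately show ?case using insert by (simp add: openin_Int)
qed

lemma Cp_nbhd_subset_openin:
  assumes "openin (Cp X) W" "f \<in> W"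
  obtains F e where "finite F" "F \<subseteq> topspace X" "e > 0" "Cp_nbhd X F f e \<subseteq> W"
proof -
  let ?P = "product_topology (\<lambda>_. euclideanreal) (topspace X)"
  obtain T where T: "openin ?P T" "W = T \<inter> Cfun X"
    using assms(1) unfolding Cp_def by (auto simp: openin_subtopology)
  then obtain U where U: "finite {i \<in> topspace X. U i \<noteq> UNIV}" "\<forall>i\<in>topspace X. open (U i)"
    "f \<in> Pi\<^sub>E (topspace X) U" "Pi\<^sub>E (topspace X) U \<subseteq> T"
    using assms(2) unfolding openin_product_topology_alt by fastforce
  define F where "F = {i \<in> topspace X. U i \<noteq> UNIV}"
  have "\<forall>i\<in>F. \<exists>r>0. ball (f i) r \<subseteq> U i"
    using U unfolding F_def by (auto simp: open_contains_ball PiE_iff)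
  then obtain r where r: "\<forall>i\<in>F. r i > 0 \<and> ball (f i) (r i) \<subseteq> U i" by metis
  define e where "e = Min (insert 1 (r ` F))"
  have F: "finite F" "F \<subseteq> topspace X" using U(1) by (auto simp: F_def)
  have e: "e > 0" "\<forall>i\<in>F. e \<le> r i" unfolding e_def using F r by auto
  have "g \<in> W" if g: "g \<in> Cp_nbhd X F f e" for g
  proof -
    have "g i \<in> U i" if "i \<in> topspace X" for i
    proof (cases "i \<in> F")
      case True
      then have "g i \<in> ball (f i) (r i)"
        using g e by (force simp: Cp_nbhd_def dist_real_def abs_minus_commute)
      then show ?thesis using r True by blast
    next
      case False
      then show ?thesis using that by (simp add: F_def)
    qed
    then have "g \<in> Pi\<^sub>E (topspace X) U"
      using g by (auto simp: Cp_nbhd_def Cfun_def PiE_iff)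
    then show ?thesis using g T U by (auto simp: Cp_nbhd_def)
  qed
  then show thesis using that F e by blast
qed

lemma in_closure_of_Cp:
  assumes "f \<in> Cfun X"
  shows "f \<in> Cp X closure_of B \<longleftrightarrow>
    (\<forall>F e. finite F \<and> F \<subseteq> topspace X \<and> e > 0 \<longrightarrow> Cp_nbhd X F f e \<inter> B \<noteq> {})"
proof
  assume f: "f \<in> Cp X closure_of B"
  show "\<forall>F e. finite F \<and> F \<subseteq> topspace X \<and> e > 0 \<longrightarrow> Cp_nbhd X F f e \<inter> B \<noteq> {}"
  proof (intro allI impI)
    fix F and e :: real
    assume "finite F \<and> F \<subseteq> topspace X \<and> e > 0"
    then have "openin (Cp X) (Cp_nbhd X F f e)" "f \<in> Cp_nbhd X F f e"
      using openin_Cp_nbhd Cp_nbhd_self[OF assms] by auto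
    then show "Cp_nbhd X F f e \<inter> B \<noteq> {}"
      using f unfolding in_closure_of by blast
  qed
next
  assume nbhd: "\<forall>F e. finite F \<and> F \<subseteq> topspace X \<and> e > 0 \<longrightarrow> Cp_nbhd X F f e \<inter> B \<noteq> {}"
  show "f \<in> Cp X closure_of B"
    unfolding in_closure_of topspace_Cp
  proof (intro conjI assms allI impI)
    fix W assume "f \<in> W \<and> openin (Cp X) W"
    then obtain F e where "finite F" "F \<subseteq> topspace X" "e > 0" "Cp_nbhd X F f e \<subseteq> W"
      using Cp_nbhd_subset_openin by metis
    then show "\<exists>g. g \<in> B \<and> g \<in> W"
      using nbhd by blast
  qed
qed

lemma Omega_at_Cp_iff:
  assumes "f \<in> Cfun X"
  shows "B \<in> Omega_at (Cp X) f \<longleftrightarrow> B \<subseteq> Cfun X \<and> f \<notin> B \<and>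
    (\<forall>F e. finite F \<and> F \<subseteq> topspace X \<and> e > 0 \<longrightarrow> Cp_nbhd X F f e \<inter> B \<noteq> {})"
  unfolding Omega_at_def topspace_Cp mem_Collect_eq in_closure_of_Cp[OF assms] by argo

lemma Omega_at_CpI:
  assumes "f \<in> Cfun X" "B \<subseteq> Cfun X" "f \<notin> B"
    and "\<And>F e. finite F \<Longrightarrow> F \<subseteq> topspace X \<Longrightarrow> e > 0 \<Longrightarrow> \<exists>g\<in>B. \<forall>x\<in>F. \<bar>g x - f x\<bar> < e"
  shows "B \<in> Omega_at (Cp X) f"
  unfolding Omega_at_Cp_iff[OF assms(1)]
proof (intro conjI allI impI assms(2,3))
  fix F and e :: real
  assume "finite F \<and> F \<subseteq> topspace X \<and> e > 0"
  then obtain g where "g \<in> B" "\<forall>x\<in>F. \<bar>g x - f x\<bar> < e"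
    using assms(4) by blast
  then show "Cp_nbhd X F f e \<inter> B \<noteq> {}"
    using assms(2) by (auto simp: Cp_nbhd_def)
qed

lemma Gamma_at_Cp_iff:
  assumes "f \<in> Cfun X"
  shows "A \<in> Gamma_at (Cp X) f \<longleftrightarrow> A \<subseteq> Cfun X \<and> infinite A \<and> f \<notin> A \<and>
    (\<forall>x\<in>topspace X. \<forall>e>0. finite {g \<in> A. e \<le> \<bar>g x - f x\<bar>})"
proof -
  have pointwise: "(\<forall>W. openin (Cp X) W \<and> f \<in> W \<longrightarrow> finite (A - W)) \<longleftrightarrow>
        (\<forall>x\<in>topspace X. \<forall>e>0. finite {g \<in> A. e \<le> \<bar>g x - f x\<bar>})"
    if A: "A \<subseteq> Cfun X"
  proof safe
    fix x and e :: real
    assume "\<forall>W. openin (Cp X) W \<and> f \<in> W \<longrightarrow> finite (A - W)" "x \<in> topspace X" "e > 0"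
    then have "finite (A - Cp_nbhd X {x} f e)"
      using assms openin_Cp_nbhd[of "{x}" X f e] Cp_nbhd_self by blast
    moreover have "A - Cp_nbhd X {x} f e = {g \<in> A. e \<le> \<bar>g x - f x\<bar>}"
      using A by (auto simp: Cp_nbhd_def)
    ultimately show "finite {g \<in> A. e \<le> \<bar>g x - f x\<bar>}" by simp
  next
    fix W
    assume fin: "\<forall>x\<in>topspace X. \<forall>e>0. finite {g \<in> A. e \<le> \<bar>g x - f x\<bar>}"
      and W: "openin (Cp X) W" "f \<in> W"
    obtain F e where F: "finite F" "F \<subseteq> topspace X" "e > 0" "Cp_nbhd X F f e \<subseteq> W"
      using W by (rule Cp_nbhd_subset_openin)
    have "A - W \<subseteq> (\<Union>x\<in>F. {g \<in> A. e \<le> \<bar>g x - f x\<bar>})"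
      using A F(4) by (force simp: Cp_nbhd_def)
    moreover have "finite (\<Union>x\<in>F. {g \<in> A. e \<le> \<bar>g x - f x\<bar>})"
      using F fin by blast
    ultimately show "finite (A - W)" by (rule finite_subset)
  qed
  show ?thesis
    using pointwise unfolding Gamma_at_def topspace_Cp mem_Collect_eq by (cases "A \<subseteq> Cfun X") simp_all
qed

lemma cozero_set_openin:
  assumes "cozero_set X U"
  shows "openin X U"
proof -
  obtain g where g: "continuous_map X euclideanreal g" "U = {x \<in> topspace X. g x \<in> -{0}}"
    using assms unfolding cozero_set_def by auto
  show ?thesis
    unfolding g(2) by (rule openin_continuous_map_preimage[OF g(1)]) auto
qed

lemma cozero_set_less:
  "continuous_map X euclideanreal g \<Longrightarrow> cozero_set X {x \<in> topspace X. g x < c}"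
proof -
  assume "continuous_map X euclideanreal g"
  then have "continuous_map X euclideanreal (\<lambda>x. max 0 (c - g x))"
    by (intro continuous_intros) auto
  then show ?thesis
    unfolding cozero_set_def by (intro exI[of _ "\<lambda>x. max 0 (c - g x)"] conjI) auto
qed

lemma zero_set_le:
  "continuous_map X euclideanreal g \<Longrightarrow> zero_set X {x \<in> topspace X. g x \<le> c}"
proof -
  assume "continuous_map X euclideanreal g"
  then have "continuous_map X euclideanreal (\<lambda>x. max 0 (g x - c))"
    by (intro continuous_intros) auto
  then show ?thesis
    unfolding zero_set_def by (intro exI[of _ "\<lambda>x. max 0 (g x - c)"] conjI) auto
qed

lemma zero_set_cozero_set_separation:
  assumes "zero_set X Z" "cozero_set X U" "Z \<subseteq> U"
  obtains \<phi> where "continuous_map X euclideanreal \<phi>"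
    "\<And>x. x \<in> topspace X \<Longrightarrow> \<phi> x = 0 \<longleftrightarrow> x \<in> Z"
    "\<And>x. x \<in> topspace X \<Longrightarrow> x \<notin> U \<Longrightarrow> \<phi> x = 1"
proof -
  obtain k where k: "continuous_map X euclideanreal k" "Z = {x \<in> topspace X. k x = 0}"
    using assms(1) unfolding zero_set_def by auto
  obtain h where h: "continuous_map X euclideanreal h" "U = {x \<in> topspace X. h x \<noteq> 0}"
    using assms(2) unfolding cozero_set_def by auto
  have nz: "\<bar>k x\<bar> + \<bar>h x\<bar> \<noteq> 0" if "x \<in> topspace X" for x
    using that assms(3) k h by auto
  show thesis
  proof (rule that[of "\<lambda>x. \<bar>k x\<bar> / (\<bar>k x\<bar> + \<bar>h x\<bar>)"])
    show "continuous_map X euclideanreal (\<lambda>x. \<bar>k x\<bar> / (\<bar>k x\<bar> + \<bar>h x\<bar>))"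
      using k h nz by (intro continuous_intros) auto
  next
    fix x assume "x \<in> topspace X"
    then show "\<bar>k x\<bar> / (\<bar>k x\<bar> + \<bar>h x\<bar>) = 0 \<longleftrightarrow> x \<in> Z"
      using nz[of x] k(2) by auto
  next
    fix x assume "x \<in> topspace X" "x \<notin> U"
    then show "\<bar>k x\<bar> / (\<bar>k x\<bar> + \<bar>h x\<bar>) = 1"
      using nz[of x] h(2) by auto
  qed
qed

lemma is_cover_memberD: "is_cover X \<U> \<Longrightarrow> U \<in> \<U> \<Longrightarrow> U \<subset> topspace X"
  unfolding is_cover_def by blast

lemma infinite_image_of_proper_subsets:
  assumes "infinite I" "\<And>i. i \<in> I \<Longrightarrow> V i \<subset> topspace X"
    and "\<And>x. x \<in> topspace X \<Longrightarrow> finite {i \<in> I. x \<notin> V i}"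
  shows "infinite (V ` I)"
proof
  assume "finite (V ` I)"
  then obtain i0 where i0: "i0 \<in> I" "infinite {i \<in> I. V i = V i0}"
    using pigeonhole_infinite assms(1) by blast
  then obtain x where x: "x \<in> topspace X" "x \<notin> V i0"
    using assms(2) by blast
  have "{i \<in> I. V i = V i0} \<subseteq> {i \<in> I. x \<notin> V i}"
    using x by auto
  then show False
    using i0(2) assms(3)[OF x(1)] finite_subset by blast
qed

lemma gamma_cover_image:
  assumes "infinite I" "\<And>i. i \<in> I \<Longrightarrow> V i \<subset> topspace X"
    and "\<And>x. x \<in> topspace X \<Longrightarrow> finite {i \<in> I. x \<notin> V i}"
  shows "gamma_cover X (V ` I)"
proof -
  have inf: "infinite (V ` I)"
    using infinite_image_of_proper_subsets assms by blast
  have cover: "x \<in> \<Union>(V ` I)" if "x \<in> topspace X" for x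
  proof -
    have "{i \<in> I. x \<notin> V i} \<noteq> I"
      using assms(1) assms(3)[OF that] by auto
    then show ?thesis by auto
  qed
  show ?thesis
    unfolding gamma_cover_def is_cover_def
  proof (intro conjI ballI)
    show "\<Union>(V ` I) = topspace X"
      using cover assms(2) by (auto simp: psubset_eq)
    show "topspace X \<notin> V ` I"
      using assms(2) by blast
    show "infinite (V ` I)"
      by (rule inf)
    fix x assume "x \<in> topspace X"
    moreover have "{U \<in> V ` I. x \<notin> U} = V ` {i \<in> I. x \<notin> V i}"
      by auto
    ultimately show "finite {U \<in> V ` I. x \<notin> U}"
      using assms(3) by simp
  qed
qed

lemma omega_coverI:
  assumes "\<And>U. U \<in> \<U> \<Longrightarrow> U \<subset> topspace X"
    and "\<And>F. finite F \<Longrightarrow> F \<subseteq> topspace X \<Longrightarrow> \<exists>U\<in>\<U>. F \<subseteq> U"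
  shows "omega_cover X \<U>"
proof -
  have "x \<in> \<Union>\<U>" if "x \<in> topspace X" for x
    using assms(2)[of "{x}"] that by auto
  then show ?thesis
    using assms unfolding omega_cover_def is_cover_def by blast
qed

lemma omega_cover_late_member:
  fixes W :: "nat \<Rightarrow> 'a set set" and N :: nat
  assumes "omega_cover X (\<Union>k. W k)" "\<And>k. finite (W k)" "finite G" "G \<subseteq> topspace X"
  obtains k V where "N \<le> k" "V \<in> W k" "G \<subseteq> V"
proof -
  have cover: "\<Union>(\<Union>k. W k) = topspace X" "topspace X \<notin> (\<Union>k. W k)"
    and omega: "\<forall>F. finite F \<and> F \<subseteq> topspace X \<longrightarrow> (\<exists>V\<in>(\<Union>k. W k). F \<subseteq> V)"
    using assms(1) by (simp_all add: omega_cover_def is_cover_def)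
  have "\<exists>x. x \<in> topspace X \<and> x \<notin> V" if "V \<in> (\<Union>k<N. W k)" for V
  proof -
    have "V \<subseteq> topspace X" "V \<noteq> topspace X"
      using that cover by auto
    then show ?thesis by auto
  qed
  then obtain p where p: "\<And>V. V \<in> (\<Union>k<N. W k) \<Longrightarrow> p V \<in> topspace X \<and> p V \<notin> V"
    by metis
  \<comment> \<open>a point outside each member of the first \<open>N\<close> stages excludes those stages\<close>
  let ?G = "G \<union> p ` (\<Union>k<N. W k)"
  have "finite ?G"
    using assms(2,3) by simp
  moreover have "?G \<subseteq> topspace X"
    using assms(4) p by blast
  ultimately obtain V where "V \<in> (\<Union>k. W k)" and V: "?G \<subseteq> V"
    using omega by meson
  then obtain k where k: "V \<in> W k"
    by blast
  have "N \<le> k"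
  proof (rule ccontr)
    assume "\<not> N \<le> k"
    then have "V \<in> (\<Union>k<N. W k)"
      using k by (auto simp: not_le)
    then show False
      using p[of V] V by blast
  qed
  then show thesis
    using that k V by blast
qed

lemma Gamma_at_Cfun_zero_of_zero_set_gamma_cover:
  assumes gamma: "gamma_cover X \<V>"
    and \<Phi>: "\<And>V. V \<in> \<V> \<Longrightarrow>
      continuous_map X euclideanreal (\<Phi> V) \<and> (\<forall>x\<in>topspace X. \<Phi> V x = 0 \<longleftrightarrow> x \<in> V)"
  shows "(\<lambda>V. restrict (\<Phi> V) (topspace X)) ` \<V> \<in> Gamma_at (Cp X) (Cfun_zero X)"
proof -
  define \<phi> where "\<phi> V = restrict (\<Phi> V) (topspace X)" for V
  have V_proper: "V \<subset> topspace X" if "V \<in> \<V>" for V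
    using gamma that unfolding gamma_cover_def by (auto dest: is_cover_memberD)
  have zeros: "V = {x \<in> topspace X. \<phi> V x = 0}" if "V \<in> \<V>" for V
    using \<Phi>[OF that] V_proper[OF that] unfolding \<phi>_def by auto
  have "inj_on \<phi> \<V>"
  proof (rule inj_onI)
    fix V W assume "V \<in> \<V>" "W \<in> \<V>" "\<phi> V = \<phi> W"
    then show "V = W"
      using zeros[of V] zeros[of W] by simp
  qed
  moreover have "infinite \<V>"
    using gamma unfolding gamma_cover_def by simp
  ultimately have "infinite (\<phi> ` \<V>)"
    by (simp add: finite_image_iff)
  moreover have "Cfun_zero X \<notin> \<phi> ` \<V>"
  proof
    assume "Cfun_zero X \<in> \<phi> ` \<V>"
    then obtain V where V: "Cfun_zero X = \<phi> V" "V \<in> \<V>"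
      by (rule imageE)
    moreover have "{x \<in> topspace X. Cfun_zero X x = 0} = topspace X"
      by (auto simp: Cfun_zero_def)
    ultimately have "V = topspace X"
      using zeros[of V] by simp
    then show False
      using V_proper[OF V(2)] by simp
  qed
  moreover have "finite {g \<in> \<phi> ` \<V>. e \<le> \<bar>g x - Cfun_zero X x\<bar>}"
    if "x \<in> topspace X" "e > 0" for x and e :: real
  proof -
    have "{g \<in> \<phi> ` \<V>. e \<le> \<bar>g x - Cfun_zero X x\<bar>} \<subseteq> \<phi> ` {V \<in> \<V>. x \<notin> V}"
      using that zeros by (force simp: Cfun_zero_def)
    moreover have "finite (\<phi> ` {V \<in> \<V>. x \<notin> V})"
      using gamma that unfolding gamma_cover_def by simp
    ultimately show ?thesis
      by (rule finite_subset)
  qed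
  moreover have "\<phi> V \<in> Cfun X" if "V \<in> \<V>" for V
    unfolding \<phi>_def using \<Phi>[OF that] by (simp add: restrict_in_Cfun)
  ultimately show ?thesis
    unfolding \<phi>_def[symmetric] by (auto simp: Gamma_at_Cp_iff[OF Cfun_zero_in_Cfun])
qed

lemma Gamma_F_converging_family:
  assumes "\<U> \<in> Gamma_F X"
  obtains A \<psi> where "A \<in> Gamma_at (Cp X) (Cfun_zero X)"
    "\<forall>\<phi>\<in>A. \<psi> \<phi> \<in> \<U> \<and> {x \<in> topspace X. \<bar>\<phi> x\<bar> < 1} \<subseteq> \<psi> \<phi>"
proof -
  obtain F where coz: "\<And>U. U \<in> \<U> \<Longrightarrow> cozero_set X U"
    and F: "\<And>U. U \<in> \<U> \<Longrightarrow> zero_set X (F U) \<and> F U \<subseteq> U" and gF: "gamma_cover X (F ` \<U>)"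
    using assms unfolding Gamma_F_def by auto
  \<comment> \<open>index by the zero-sets: \<open>F\<close> need not be injective, and only \<open>F ` \<U>\<close> is a \<open>\<gamma>\<close>-cover\<close>
  define \<V> where "\<V> = F ` \<U>"
  define s where "s = inv_into \<U> F"
  have s_inv: "s V \<in> \<U>" "F (s V) = V" if "V \<in> \<V>" for V
    using that unfolding s_def \<V>_def by (auto simp: inv_into_into f_inv_into_f)
  define separates where "separates V \<phi> \<longleftrightarrow> continuous_map X euclideanreal \<phi> \<and>
      (\<forall>x\<in>topspace X. \<phi> x = 0 \<longleftrightarrow> x \<in> V) \<and> (\<forall>x\<in>topspace X. x \<notin> s V \<longrightarrow> \<phi> x = 1)" for V \<phi>
  have "\<exists>\<phi>. separates V \<phi>" if "V \<in> \<V>" for V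
  proof -
    have "zero_set X V" "cozero_set X (s V)" "V \<subseteq> s V"
      using F[OF s_inv(1)[OF that]] coz[OF s_inv(1)[OF that]] s_inv(2)[OF that] by auto
    then show ?thesis
      unfolding separates_def by (rule zero_set_cozero_set_separation) blast
  qed
  then obtain \<Phi> where \<Phi>: "\<And>V. V \<in> \<V> \<Longrightarrow> separates V (\<Phi> V)"
    by metis
  define \<phi> where "\<phi> V = restrict (\<Phi> V) (topspace X)" for V
  have Gamma: "\<phi> ` \<V> \<in> Gamma_at (Cp X) (Cfun_zero X)"
    unfolding \<phi>_def \<V>_def
    by (rule Gamma_at_Cfun_zero_of_zero_set_gamma_cover[OF gF])
      (use \<Phi> in \<open>auto simp: separates_def \<V>_def\<close>)
  have dominated: "s (inv_into \<V> \<phi> g) \<in> \<U> \<and> {x \<in> topspace X. \<bar>g x\<bar> < 1} \<subseteq> s (inv_into \<V> \<phi> g)"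
    if "g \<in> \<phi> ` \<V>" for g
  proof -
    let ?V = "inv_into \<V> \<phi> g"
    have V: "?V \<in> \<V>" "\<phi> ?V = g"
      using that by (auto simp: inv_into_into f_inv_into_f)
    have "x \<in> s ?V" if "x \<in> topspace X" "\<bar>g x\<bar> < 1" for x
    proof -
      have "g x = \<Phi> ?V x"
        using that(1) V(2) unfolding \<phi>_def by (metis restrict_apply')
      then show ?thesis
        using that \<Phi>[OF V(1)] unfolding separates_def by force
    qed
    then show ?thesis
      using s_inv(1)[OF V(1)] by blast
  qed
  show thesis
    using that[OF Gamma, of "\<lambda>g. s (inv_into \<V> \<phi> g)"] dominated by blast
qed

lemma gamma_cover_of_converging_family:
  assumes A: "A \<in> Gamma_at (Cp X) f" and f: "f \<in> Cfun X" and e: "e > 0"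
    and I: "I \<subseteq> A" "infinite I"
    and proper: "\<And>g. g \<in> I \<Longrightarrow> V g \<subset> topspace X"
    and nbhd: "\<And>g x. g \<in> I \<Longrightarrow> x \<in> topspace X \<Longrightarrow> \<bar>g x - f x\<bar> < e \<Longrightarrow> x \<in> V g"
  shows "gamma_cover X (V ` I)"
proof (rule gamma_cover_image[OF I(2) proper])
  fix x assume x: "x \<in> topspace X"
  have "{g \<in> I. x \<notin> V g} \<subseteq> {g \<in> A. e \<le> \<bar>g x - f x\<bar>}"
    using I(1) nbhd x by force
  moreover have "finite {g \<in> A. e \<le> \<bar>g x - f x\<bar>}"
    using A x e by (simp add: Gamma_at_Cp_iff[OF f])
  ultimately show "finite {g \<in> I. x \<notin> V g}"
    by (rule finite_subset)
qed

lemma Gamma_F_of_converging_family: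
  assumes A: "A \<in> Gamma_at (Cp X) f" and f: "f \<in> Cfun X" and e: "e > 0"
    and proper: "\<And>g. g \<in> A \<Longrightarrow> {x \<in> topspace X. \<bar>g x - f x\<bar> < e} \<noteq> topspace X"
  shows "(\<lambda>g. {x \<in> topspace X. \<bar>g x - f x\<bar> < e}) ` A \<in> Gamma_F X"
proof -
  define U where "U g = {x \<in> topspace X. \<bar>g x - f x\<bar> < e}" for g
  define Z where "Z g = {x \<in> topspace X. \<bar>g x - f x\<bar> \<le> e / 2}" for g
  have A_Cfun: "A \<subseteq> Cfun X" and "infinite A"
    using A by (auto simp: Gamma_at_Cp_iff[OF f])
  have dist_cont: "continuous_map X euclideanreal (\<lambda>x. \<bar>g x - f x\<bar>)" if "g \<in> A" for g
    using A_Cfun that f by (auto simp: Cfun_def intro!: continuous_intros)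
  have Z_U: "Z g \<subseteq> U g" for g
    using e by (auto simp: Z_def U_def)
  have U_proper: "U g \<subset> topspace X" if "g \<in> A" for g
    using proper[OF that] by (auto simp: U_def)
  have gamma_U: "gamma_cover X (U ` A)"
    using \<open>infinite A\<close> U_proper
    by (intro gamma_cover_of_converging_family[OF A f e]) (auto simp: U_def)
  have cozero_U: "cozero_set X (U g)" if "g \<in> A" for g
    unfolding U_def using cozero_set_less[OF dist_cont[OF that]] .
  have gamma_Z: "gamma_cover X ((Z \<circ> inv_into A U) ` U ` A)"
  proof -
    let ?I = "inv_into A U ` U ` A"
    have I: "?I \<subseteq> A"
      by (auto intro: inv_into_into)
    have "U ` ?I = U ` A"
      by (force simp: image_comp f_inv_into_f)
    then have "infinite ?I"
      using gamma_U unfolding gamma_cover_def by (metis finite_imageI)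
    moreover have "Z g \<subset> topspace X" if "g \<in> ?I" for g
      using U_proper[of g] Z_U[of g] I that by blast
    ultimately have "gamma_cover X (Z ` ?I)"
      using I e by (intro gamma_cover_of_converging_family[OF A f, of "e / 2"]) (auto simp: Z_def)
    then show ?thesis
      by (simp add: image_comp)
  qed
  have zero_Z: "zero_set X ((Z \<circ> inv_into A U) W) \<and> (Z \<circ> inv_into A U) W \<subseteq> W" if "W \<in> U ` A" for W
  proof -
    have g: "inv_into A U W \<in> A" "U (inv_into A U W) = W"
      using that by (auto simp: inv_into_into f_inv_into_f)
    have "zero_set X (Z (inv_into A U W))"
      unfolding Z_def by (rule zero_set_le[OF dist_cont[OF g(1)]])
    then show ?thesis
      using Z_U g(2) by auto
  qed
  have "U ` A \<in> Gamma_F X"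
    unfolding Gamma_F_def using gamma_U cozero_U gamma_Z zero_Z by blast
  then show ?thesis
    by (simp add: U_def)
qed

lemma Omega_cov_of_dominating_members:
  assumes \<U>: "\<And>n. \<U> n \<in> Gamma_F X"
    and \<psi>: "\<And>n \<phi>. \<phi> \<in> B n \<Longrightarrow> \<psi> n \<phi> \<in> \<U> n \<and> {x \<in> topspace X. \<bar>\<phi> x\<bar> < 1} \<subseteq> \<psi> n \<phi>"
    and B: "(\<Union>n. B n) \<in> Omega_at (Cp X) (Cfun_zero X)"
  shows "(\<Union>n. \<psi> n ` B n) \<in> Omega_cov X"
  unfolding Omega_cov_def mem_Collect_eq
proof (intro conjI ballI omega_coverI)
  fix V assume "V \<in> (\<Union>n. \<psi> n ` B n)"
  then obtain n where "V \<in> \<U> n"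
    using \<psi> by blast
  moreover have "is_cover X (\<U> n)" "\<forall>V \<in> \<U> n. cozero_set X V"
    using \<U>[of n] unfolding Gamma_F_def gamma_cover_def by blast+
  ultimately show "V \<subset> topspace X" "openin X V"
    by (simp_all add: is_cover_memberD cozero_set_openin)
next
  fix G assume G: "finite G" "G \<subseteq> topspace X"
  then have "Cp_nbhd X G (Cfun_zero X) 1 \<inter> (\<Union>n. B n) \<noteq> {}"
    using B by (simp add: Omega_at_Cp_iff[OF Cfun_zero_in_Cfun])
  then obtain \<phi> n where \<phi>: "\<phi> \<in> Cp_nbhd X G (Cfun_zero X) 1" "\<phi> \<in> B n"
    by blast
  have "\<bar>\<phi> x\<bar> < 1" if "x \<in> G" for x
  proof -
    have "\<bar>\<phi> x - Cfun_zero X x\<bar> < 1"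
      using \<phi>(1) that by (simp add: Cp_nbhd_def)
    then show ?thesis
      using that G(2) by (auto simp: Cfun_zero_def)
  qed
  then have "G \<subseteq> \<psi> n \<phi>"
    using \<psi>[OF \<phi>(2)] G(2) by blast
  moreover have "\<psi> n \<phi> \<in> (\<Union>n. \<psi> n ` B n)"
    using \<phi>(2) by blast
  ultimately show "\<exists>V\<in>(\<Union>n. \<psi> n ` B n). G \<subseteq> V"
    by blast
qed

lemma S_fin_Gamma_F_Omega_cov_if_Cfun_zero:
  assumes H: "S_fin (Gamma_at (Cp X) (Cfun_zero X)) (Omega_at (Cp X) (Cfun_zero X))"
  shows "S_fin (Gamma_F X) (Omega_cov X)"
  unfolding S_fin_def
proof (intro allI impI)
  fix \<U> :: "nat \<Rightarrow> 'a set set"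
  assume \<U>: "\<forall>n. \<U> n \<in> Gamma_F X"
  have "\<forall>n. \<exists>A \<psi>. A \<in> Gamma_at (Cp X) (Cfun_zero X) \<and>
      (\<forall>\<phi>\<in>A. \<psi> \<phi> \<in> \<U> n \<and> {x \<in> topspace X. \<bar>\<phi> x\<bar> < 1} \<subseteq> \<psi> \<phi>)"
  proof
    fix n
    obtain A \<psi> where "A \<in> Gamma_at (Cp X) (Cfun_zero X)"
      "\<forall>\<phi>\<in>A. \<psi> \<phi> \<in> \<U> n \<and> {x \<in> topspace X. \<bar>\<phi> x\<bar> < 1} \<subseteq> \<psi> \<phi>"
      using Gamma_F_converging_family[OF \<U>[rule_format, of n]] .
    then show "\<exists>A \<psi>. A \<in> Gamma_at (Cp X) (Cfun_zero X) \<and>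
      (\<forall>\<phi>\<in>A. \<psi> \<phi> \<in> \<U> n \<and> {x \<in> topspace X. \<bar>\<phi> x\<bar> < 1} \<subseteq> \<psi> \<phi>)"
      by (intro exI conjI)
  qed
  then obtain A where "\<forall>n. \<exists>\<psi>. A n \<in> Gamma_at (Cp X) (Cfun_zero X) \<and>
      (\<forall>\<phi>\<in>A n. \<psi> \<phi> \<in> \<U> n \<and> {x \<in> topspace X. \<bar>\<phi> x\<bar> < 1} \<subseteq> \<psi> \<phi>)"
    by (rule choice[THEN exE])
  then obtain \<psi> where "\<forall>n. A n \<in> Gamma_at (Cp X) (Cfun_zero X) \<and>
      (\<forall>\<phi>\<in>A n. \<psi> n \<phi> \<in> \<U> n \<and> {x \<in> topspace X. \<bar>\<phi> x\<bar> < 1} \<subseteq> \<psi> n \<phi>)"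
    by (rule choice[THEN exE])
  then have A: "\<forall>n. A n \<in> Gamma_at (Cp X) (Cfun_zero X)"
    and \<psi>: "\<And>n \<phi>. \<phi> \<in> A n \<Longrightarrow> \<psi> n \<phi> \<in> \<U> n \<and> {x \<in> topspace X. \<bar>\<phi> x\<bar> < 1} \<subseteq> \<psi> n \<phi>"
    by blast+
  obtain B where B: "\<forall>n. finite (B n) \<and> B n \<subseteq> A n"
    and B_Omega: "(\<Union>n. B n) \<in> Omega_at (Cp X) (Cfun_zero X)"
    using H A unfolding S_fin_def by blast
  have "(\<Union>n. \<psi> n ` B n) \<in> Omega_cov X"
  proof (rule Omega_cov_of_dominating_members[OF _ _ B_Omega])
    show "\<U> n \<in> Gamma_F X" for n
      using \<U> by blast
    show "\<psi> n \<phi> \<in> \<U> n \<and> {x \<in> topspace X. \<bar>\<phi> x\<bar> < 1} \<subseteq> \<psi> n \<phi>" if "\<phi> \<in> B n" for n \<phi>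
      using that B \<psi>[of \<phi> n] by blast
  qed
  moreover have "finite (\<psi> n ` B n) \<and> \<psi> n ` B n \<subseteq> \<U> n" for n
    using B \<psi>[of _ n] by auto
  ultimately show "\<exists>W. (\<forall>n. finite (W n) \<and> W n \<subseteq> \<U> n) \<and> (\<Union>n. W n) \<in> Omega_cov X"
    by (intro exI[of _ "\<lambda>n. \<psi> n ` B n"] conjI allI) simp_all
qed

lemma selection_shift:
  fixes A B :: "nat \<Rightarrow> 'b set"
  assumes "\<forall>k. finite (B k) \<and> B k \<subseteq> A (k + m)"
  shows "\<exists>B'. (\<forall>n. finite (B' n) \<and> B' n \<subseteq> A n) \<and> (\<Union>n. B' n) = (\<Union>k. B k)"
proof -
  define B' where "B' n = (if m \<le> n then B (n - m) else {})" for n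
  have "finite (B' n) \<and> B' n \<subseteq> A n" for n
    using assms[rule_format, of "n - m"] by (auto simp: B'_def)
  moreover have "B k = B' (k + m)" for k
    by (simp add: B'_def)
  then have "(\<Union>k. B k) \<subseteq> (\<Union>n. B' n)"
    by blast
  moreover have "(\<Union>n. B' n) \<subseteq> (\<Union>k. B k)"
    by (auto simp: B'_def split: if_splits)
  ultimately show ?thesis
    by (intro exI[of _ B'] conjI allI antisym) simp_all
qed

lemma Omega_at_Cp_of_proper_nbhds:
  fixes A :: "nat \<Rightarrow> ('a \<Rightarrow> real) set" and r :: "nat \<Rightarrow> real"
  assumes H: "S_fin (Gamma_F X) (Omega_cov X)" and f: "f \<in> Cfun X"
    and A: "\<And>n. A n \<in> Gamma_at (Cp X) f"
    and r: "\<And>n. r n > 0" "r \<longlonglongrightarrow> 0"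
    and proper: "\<And>n g. g \<in> A n \<Longrightarrow> {x \<in> topspace X. \<bar>g x - f x\<bar> < r n} \<noteq> topspace X"
  shows "\<exists>B. (\<forall>n. finite (B n) \<and> B n \<subseteq> A n) \<and> (\<Union>n. B n) \<in> Omega_at (Cp X) f"
proof -
  define U where "U n g = {x \<in> topspace X. \<bar>g x - f x\<bar> < r n}" for n g
  have "U n ` A n \<in> Gamma_F X" for n
    unfolding U_def using Gamma_F_of_converging_family[OF A f r(1) proper] .
  then obtain W where W: "\<And>n. finite (W n) \<and> W n \<subseteq> U n ` A n"
    and W_Omega: "(\<Union>n. W n) \<in> Omega_cov X"
    using H unfolding S_fin_def by meson
  have "\<exists>C \<subseteq> A n. finite C \<and> W n = U n ` C" for n
    using W[of n] by (simp add: finite_subset_image)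
  then obtain B where B: "\<And>n. B n \<subseteq> A n \<and> finite (B n) \<and> W n = U n ` B n"
    by metis
  have A_Cfun: "A n \<subseteq> Cfun X" and f_notin: "f \<notin> A n" for n
    using A[of n] by (simp_all add: Gamma_at_Cp_iff[OF f])
  have approx: "\<exists>g\<in>(\<Union>n. B n). \<forall>x\<in>F. \<bar>g x - f x\<bar> < e"
    if F: "finite F" "F \<subseteq> topspace X" and "e > 0" for F e
  proof -
    obtain N where N: "\<And>n. N \<le> n \<Longrightarrow> r n < e"
      using order_tendstoD(2)[OF r(2) \<open>e > 0\<close>] unfolding eventually_sequentially by blast
    have "omega_cover X (\<Union>n. W n)"
      using W_Omega by (simp add: Omega_cov_def)
    then obtain k V where "N \<le> k" "V \<in> W k" "F \<subseteq> V"
      using W by (elim omega_cover_late_member[OF _ _ F]) blast+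
    moreover have "V \<in> U k ` B k"
      using B[of k] \<open>V \<in> W k\<close> by simp
    ultimately obtain g where g: "g \<in> B k" "F \<subseteq> U k g"
      by blast
    have "\<bar>g x - f x\<bar> < e" if "x \<in> F" for x
      using g(2) that N[OF \<open>N \<le> k\<close>] by (auto simp: U_def)
    then show ?thesis
      using g(1) by blast
  qed
  have B_sel: "finite (B n) \<and> B n \<subseteq> A n" for n
    using B[of n] by blast
  have "(\<Union>n. B n) \<subseteq> Cfun X" "f \<notin> (\<Union>n. B n)"
    using A_Cfun f_notin B_sel by blast+
  then have "(\<Union>n. B n) \<in> Omega_at (Cp X) f"
    using approx by (rule Omega_at_CpI[OF f])
  then show ?thesis
    using B_sel by (intro exI[of _ B] conjI allI) simp_all
qed

lemma Omega_at_Cp_of_uniform_approximants: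
  fixes A :: "nat \<Rightarrow> ('a \<Rightarrow> real) set" and r :: "nat \<Rightarrow> real"
  assumes f: "f \<in> Cfun X" and A: "\<And>n. A n \<subseteq> Cfun X" "\<And>n. f \<notin> A n" and r: "r \<longlonglongrightarrow> 0"
    and good: "infinite {n. \<exists>g\<in>A n. \<forall>x\<in>topspace X. \<bar>g x - f x\<bar> < r n}"
  shows "\<exists>B. (\<forall>n. finite (B n) \<and> B n \<subseteq> A n) \<and> (\<Union>n. B n) \<in> Omega_at (Cp X) f"
proof -
  define close where "close n g \<longleftrightarrow> g \<in> A n \<and> (\<forall>x\<in>topspace X. \<bar>g x - f x\<bar> < r n)" for n g
  define B where "B n = (if \<exists>g. close n g then {SOME g. close n g} else {})" for n
  have B: "finite (B n) \<and> B n \<subseteq> A n" for n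
    using someI_ex[of "close n"] by (auto simp: B_def close_def)
  have "\<exists>g\<in>(\<Union>n. B n). \<forall>x\<in>F. \<bar>g x - f x\<bar> < e"
    if "finite F" "F \<subseteq> topspace X" "e > 0" for F e
  proof -
    obtain N where N: "\<And>n. N \<le> n \<Longrightarrow> r n < e"
      using order_tendstoD(2)[OF r \<open>e > 0\<close>] unfolding eventually_sequentially by blast
    obtain n where "N \<le> n" "\<exists>g. close n g"
      using good unfolding infinite_nat_iff_unbounded_le close_def by blast
    then have "close n (SOME g. close n g)" "(SOME g. close n g) \<in> B n"
      by (simp_all add: someI_ex B_def)
    moreover have "\<bar>g x - f x\<bar> < e" if "close n g" "x \<in> F" for g x
      using that \<open>F \<subseteq> topspace X\<close> N[OF \<open>N \<le> n\<close>] unfolding close_def by fastforce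
    ultimately show ?thesis
      by blast
  qed
  moreover have "(\<Union>n. B n) \<subseteq> Cfun X" "f \<notin> (\<Union>n. B n)"
    using A B by blast+
  ultimately have "(\<Union>n. B n) \<in> Omega_at (Cp X) f"
    by (intro Omega_at_CpI[OF f])
  then show ?thesis
    using B by (intro exI[of _ B] conjI allI) simp_all
qed

lemma S_fin_Cp_if_S_fin_Gamma_F:
  assumes H: "S_fin (Gamma_F X) (Omega_cov X)" and f: "f \<in> Cfun X"
  shows "S_fin (Gamma_at (Cp X) f) (Omega_at (Cp X) f)"
  unfolding S_fin_def
proof (intro allI impI)
  fix A :: "nat \<Rightarrow> ('a \<Rightarrow> real) set"
  assume A: "\<forall>n. A n \<in> Gamma_at (Cp X) f"
  define r :: "nat \<Rightarrow> real" where "r n = inverse (real (Suc n))" for n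
  have r: "r n > 0" "r \<longlonglongrightarrow> 0" for n
    unfolding r_def by (simp, rule LIMSEQ_inverse_real_of_nat)
  have A_Cfun: "A n \<subseteq> Cfun X" and f_notin: "f \<notin> A n" for n
    using A by (simp_all add: Gamma_at_Cp_iff[OF f])
  \<comment> \<open>a \<open>g\<close> with \<open>{|g - f| < r n} = X\<close> gives no cover member, but approximates \<open>f\<close> uniformly\<close>
  let ?good = "{n. \<exists>g\<in>A n. \<forall>x\<in>topspace X. \<bar>g x - f x\<bar> < r n}"
  show "\<exists>B. (\<forall>n. finite (B n) \<and> B n \<subseteq> A n) \<and> (\<Union>n. B n) \<in> Omega_at (Cp X) f"
  proof (cases "finite ?good")
    case False
    then show ?thesis
      by (rule Omega_at_Cp_of_uniform_approximants[OF f A_Cfun f_notin r(2)])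
  next
    case True
    then obtain m where m: "\<forall>n\<in>?good. n < m"
      unfolding finite_nat_set_iff_bounded ..
    have proper: "{x \<in> topspace X. \<bar>g x - f x\<bar> < r (k + m)} \<noteq> topspace X"
      if "g \<in> A (k + m)" for g k
    proof
      assume "{x \<in> topspace X. \<bar>g x - f x\<bar> < r (k + m)} = topspace X"
      then have "k + m \<in> ?good"
        using that by blast
      then show False
        using m by auto
    qed
    have "\<exists>B. (\<forall>k. finite (B k) \<and> B k \<subseteq> A (k + m)) \<and> (\<Union>k. B k) \<in> Omega_at (Cp X) f"
      by (rule Omega_at_Cp_of_proper_nbhds[OF H f A[rule_format] r(1)
            LIMSEQ_ignore_initial_segment[OF r(2)] proper])
    then obtain B where B: "\<forall>k. finite (B k) \<and> B k \<subseteq> A (k + m)"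
      and Omega: "(\<Union>k. B k) \<in> Omega_at (Cp X) f"
      by blast
    obtain B' where "\<forall>n. finite (B' n) \<and> B' n \<subseteq> A n" "(\<Union>n. B' n) = (\<Union>k. B k)"
      using selection_shift[OF B] by blast
    then show ?thesis
      using Omega by (intro exI[of _ B']) simp
  qed
qed

theorem mainTheorem7:
  fixes X :: "'a topology"
  assumes "tychonoff_space X"
  shows "(\<forall>f \<in> Cfun X. S_fin (Gamma_at (Cp X) f) (Omega_at (Cp X) f))
         \<longleftrightarrow> S_fin (Gamma_F X) (Omega_cov X)"
proof
  assume "\<forall>f \<in> Cfun X. S_fin (Gamma_at (Cp X) f) (Omega_at (Cp X) f)"
  then have "S_fin (Gamma_at (Cp X) (Cfun_zero X)) (Omega_at (Cp X) (Cfun_zero X))"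
    using Cfun_zero_in_Cfun by blast
  then show "S_fin (Gamma_F X) (Omega_cov X)"
    by (rule S_fin_Gamma_F_Omega_cov_if_Cfun_zero)
next
  assume "S_fin (Gamma_F X) (Omega_cov X)"
  then show "\<forall>f \<in> Cfun X. S_fin (Gamma_at (Cp X) f) (Omega_at (Cp X) f)"
    by (intro ballI S_fin_Cp_if_S_fin_Gamma_F)
qed

end
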